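(* Let $D=(V,A)$ be a digraph, $k\in\mathbb{N}$, and $\mathcal{B}_i=(V_i,A_i)$ $(i<k)$ pairwise edge-disjoint branchings in $D$ such that for every nonempty $X\subseteq V$, $\varrho_{D\setminus\!\setminus\mathcal{B}}(X)\geq|\{i<k:V_i\cap X=\varnothing\}|$. Let $B_1\subseteq B_0$ be dangerous sets with $\varrho_{D\setminus\!\setminus\mathcal{B}}(B_0)=\varrho_{D\setminus\!\setminus\mathcal{B}}(B_1)=l\geq1$. Let $\{e_1,\dots,e_l\}$ be the set of edges of $D\setminus\!\setminus\mathcal{B}$ entering $B_0$ and let $s_j$ be the head of $e_j$. Then there is a system of pairwise edge-disjoint paths $\{P_j\}_{j=1}^{l}$ in $(D\setminus\!\setminus\mathcal{B})[B_0]$ such that $P_j$ goes from $s_j$ to $B_1$. Moreover, any such path system contains every edge of $D\setminus\!\setminus\mathcal{B}$ with tail in $B_0\setminus B_1$ and head in $B_1$, and the multiset of the last vertices of the paths $P_j$ equals the multiset of heads of the edges of $D\setminus\!\setminus\mathcal{B}$ entering $B_1$.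
   Context: Digraphs may be of arbitrary cardinality with multiple edges. A branching is a digraph whose weakly connected components are arborescences (directed trees in which every vertex is reachable from the root). $D\setminus\!\setminus\mathcal{B}=(V,A\setminus\bigcup_{i<k}A_i)$; $H[B]$ is the subgraph of $H$ spanned by $B$. $\varrho_H(X)$ is the cardinality of the set of edges of $H$ with tail outside $X$ and head in $X$ (these are the edges entering $X$). A nonempty set $X\subseteq V$ is tight if $\varrho_{D\setminus\!\setminus\mathcal{B}}(X)=|\{i<k:V_i\cap X=\varnothing\}|$, and dangerous if it is tight and $X\cap V_0\neq\varnothing$. Paths are directed simple paths; a path $P$ goes from $X$ to $Y$ if $V(P)\cap X=\{\mathrm{start}(P)\}$ and $V(P)\cap Y=\{\mathrm{end}(P)\}$ (start and end may coincide; for a vertex $x$, "from $x$" means from $\{x\}$). *)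

theory Defs
  imports Main "HOL-Library.Extended_Nat" "HOL-Library.Multiset"
begin

text \<open>A digraph is given by a vertex set V, an edge set A (edges are abstract
objects, so multiple edges are allowed) and tail/head maps tail, head.
A sub(di)graph is given by a pair (W, F).\<close>

definition in_edges :: "('e \<Rightarrow> 'v) \<Rightarrow> ('e \<Rightarrow> 'v) \<Rightarrow> 'e set \<Rightarrow> 'v set \<Rightarrow> 'e set" where
  "in_edges tail head F X = {e \<in> F. tail e \<notin> X \<and> head e \<in> X}"

definition rho :: "('e \<Rightarrow> 'v) \<Rightarrow> ('e \<Rightarrow> 'v) \<Rightarrow> 'e set \<Rightarrow> 'v set \<Rightarrow> enat" where
  "rho tail head F X = (if finite (in_edges tail head F X) then enat (card (in_edges tail head F X)) else \<infinity>)"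

definition rest_edges :: "'e set \<Rightarrow> (nat \<Rightarrow> 'e set) \<Rightarrow> nat \<Rightarrow> 'e set" where
  "rest_edges A As k = A - (\<Union>i<k. As i)"

definition induced_edges :: "('e \<Rightarrow> 'v) \<Rightarrow> ('e \<Rightarrow> 'v) \<Rightarrow> 'e set \<Rightarrow> 'v set \<Rightarrow> 'e set" where
  "induced_edges tail head F B = {e \<in> F. tail e \<in> B \<and> head e \<in> B}"

definition arc_rel :: "('e \<Rightarrow> 'v) \<Rightarrow> ('e \<Rightarrow> 'v) \<Rightarrow> 'e set \<Rightarrow> ('v \<times> 'v) set" where
  "arc_rel tail head F = {(tail e, head e) | e. e \<in> F}"

definition wcomp :: "('e \<Rightarrow> 'v) \<Rightarrow> ('e \<Rightarrow> 'v) \<Rightarrow> 'v set \<Rightarrow> 'e set \<Rightarrow> 'v \<Rightarrow> 'v set" where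
  "wcomp tail head W F x = {y \<in> W. (x, y) \<in> (arc_rel tail head F \<union> (arc_rel tail head F)\<inverse>)\<^sup>*}"

definition arborescence :: "('e \<Rightarrow> 'v) \<Rightarrow> ('e \<Rightarrow> 'v) \<Rightarrow> 'v set \<Rightarrow> 'e set \<Rightarrow> bool" where
  "arborescence tail head C F \<longleftrightarrow>
     (\<forall>e\<in>F. tail e \<in> C \<and> head e \<in> C) \<and>
     (\<exists>r\<in>C. (\<forall>e\<in>F. head e \<noteq> r) \<and>
            (\<forall>v\<in>C - {r}. \<exists>!e. e \<in> F \<and> head e = v) \<and>
            (\<forall>v\<in>C. (r, v) \<in> (arc_rel tail head F)\<^sup>*))"

definition branching :: "('e \<Rightarrow> 'v) \<Rightarrow> ('e \<Rightarrow> 'v) \<Rightarrow> 'v set \<Rightarrow> 'e set \<Rightarrow> bool" where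
  "branching tail head W F \<longleftrightarrow>
     (\<forall>e\<in>F. tail e \<in> W \<and> head e \<in> W) \<and>
     (\<forall>x\<in>W. arborescence tail head (wcomp tail head W F x) {e \<in> F. tail e \<in> wcomp tail head W F x})"

definition tight :: "('e \<Rightarrow> 'v) \<Rightarrow> ('e \<Rightarrow> 'v) \<Rightarrow> 'v set \<Rightarrow> 'e set \<Rightarrow> nat \<Rightarrow> (nat \<Rightarrow> 'v set)
    \<Rightarrow> (nat \<Rightarrow> 'e set) \<Rightarrow> 'v set \<Rightarrow> bool" where
  "tight tail head V A k Vs As X \<longleftrightarrow> X \<noteq> {} \<and> X \<subseteq> V \<and>
     rho tail head (rest_edges A As k) X = enat (card {i. i < k \<and> Vs i \<inter> X = {}})"

definition dangerous :: "('e \<Rightarrow> 'v) \<Rightarrow> ('e \<Rightarrow> 'v) \<Rightarrow> 'v set \<Rightarrow> 'e set \<Rightarrow> nat \<Rightarrow> (nat \<Rightarrow> 'v set)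
    \<Rightarrow> (nat \<Rightarrow> 'e set) \<Rightarrow> 'v set \<Rightarrow> bool" where
  "dangerous tail head V A k Vs As X \<longleftrightarrow> tight tail head V A k Vs As X \<and> X \<inter> Vs 0 \<noteq> {}"

text \<open>Paths: a start vertex v and a list of edges es; vertex sequence v, head es1, ...\<close>
definition path_verts :: "('e \<Rightarrow> 'v) \<Rightarrow> 'v \<Rightarrow> 'e list \<Rightarrow> 'v list" where
  "path_verts head v es = v # map head es"

definition is_path :: "('e \<Rightarrow> 'v) \<Rightarrow> ('e \<Rightarrow> 'v) \<Rightarrow> 'v set \<Rightarrow> 'e set \<Rightarrow> 'v \<times> 'e list \<Rightarrow> bool" where
  "is_path tail head W F P \<longleftrightarrow>
     set (snd P) \<subseteq> F \<and> set (path_verts head (fst P) (snd P)) \<subseteq> W \<and>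
     (\<forall>i < length (snd P). tail (snd P ! i) = path_verts head (fst P) (snd P) ! i) \<and>
     distinct (path_verts head (fst P) (snd P))"

definition path_start :: "'v \<times> 'e list \<Rightarrow> 'v" where
  "path_start P = fst P"

definition path_end :: "('e \<Rightarrow> 'v) \<Rightarrow> 'v \<times> 'e list \<Rightarrow> 'v" where
  "path_end head P = last (path_verts head (fst P) (snd P))"

definition goes_from_to :: "('e \<Rightarrow> 'v) \<Rightarrow> 'v \<times> 'e list \<Rightarrow> 'v set \<Rightarrow> 'v set \<Rightarrow> bool" where
  "goes_from_to head P X Y \<longleftrightarrow>
     set (path_verts head (fst P) (snd P)) \<inter> X = {path_start P} \<and>
     set (path_verts head (fst P) (snd P)) \<inter> Y = {path_end head P}"

text \<open>A path system indexed by the edges entering B0 (the edges e_1..e_l):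
pairwise edge-disjoint paths in H[B0], P e going from head e to B1.\<close>
definition good_path_system :: "('e \<Rightarrow> 'v) \<Rightarrow> ('e \<Rightarrow> 'v) \<Rightarrow> 'e set \<Rightarrow> 'v set \<Rightarrow> 'v set
    \<Rightarrow> ('e \<Rightarrow> 'v \<times> 'e list) \<Rightarrow> bool" where
  "good_path_system tail head H B0 B1 P \<longleftrightarrow>
     (\<forall>e\<in>in_edges tail head H B0.
        is_path tail head B0 (induced_edges tail head H B0) (P e) \<and>
        goes_from_to head (P e) {head e} B1) \<and>
     (\<forall>e\<in>in_edges tail head H B0. \<forall>e'\<in>in_edges tail head H B0.
        e \<noteq> e' \<longrightarrow> set (snd (P e)) \<inter> set (snd (P e')) = {})"

end

theory Submission
  imports Defs
begin

text \<open>
This is an edge version of Menger's theorem inside B0. A set X with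
B1 \<subseteq> X \<subseteq> B0 is disjoint from every V_i that B0 is disjoint from, so the cut
condition together with the tightness of B0 gives at least l edges entering X.
Hence unit-capacity augmenting paths route one unit of flow from each of the l
edges entering B0 to B1, and decomposing this flow yields the path system.
Conversely, in any such system the last edge of each path enters B1 (for a path
of length 0 the edge entering B0 at its start already enters B1); distinct paths
give distinct last edges, and since exactly l edges enter B1, this assignment is
a bijection onto them.
\<close>

fun walk :: "('s \<Rightarrow> bool) \<Rightarrow> ('s \<Rightarrow> 'v) \<Rightarrow> ('s \<Rightarrow> 'v) \<Rightarrow> 'v \<Rightarrow> 's list \<Rightarrow> 'v \<Rightarrow> bool" where
  "walk ok src tgt u [] v \<longleftrightarrow> u = v"
| "walk ok src tgt u (x # xs) v \<longleftrightarrow> ok x \<and> src x = u \<and> walk ok src tgt (tgt x) xs v"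

lemma walk_append:
  "walk ok src tgt u (xs @ ys) v \<longleftrightarrow> (\<exists>w. walk ok src tgt u xs w \<and> walk ok src tgt w ys v)"
  by (induction xs arbitrary: u) auto

lemma walk_snoc:
  "walk ok src tgt u (xs @ [x]) v \<longleftrightarrow> walk ok src tgt u xs (src x) \<and> ok x \<and> tgt x = v"
  by (auto simp: walk_append)

lemma walk_mono:
  "walk ok src tgt u xs v \<Longrightarrow> (\<And>x. x \<in> set xs \<Longrightarrow> ok x \<Longrightarrow> ok' x) \<Longrightarrow> walk ok' src tgt u xs v"
  by (induction xs arbitrary: u) auto

lemma walk_split_nth:
  assumes "walk ok src tgt u xs v" "i < length xs"
  shows "walk ok src tgt u (take i xs) (src (xs ! i)) \<and> walk ok src tgt (src (xs ! i)) (drop i xs) v"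
proof -
  have "xs = take i xs @ (xs ! i # drop (Suc i) xs)"
    using assms(2) by (simp add: id_take_nth_drop)
  with assms(1) obtain w where "walk ok src tgt u (take i xs) w" "walk ok src tgt w (xs ! i # drop (Suc i) xs) v"
    by (metis walk_append)
  moreover from this(2) have "w = src (xs ! i)" by simp
  ultimately show ?thesis
    using assms(2) by (simp only: Cons_nth_drop_Suc)
qed

lemma walk_skip_cycle:
  assumes "walk ok src tgt u xs v" "\<not> distinct (map src xs)"
  shows "\<exists>ys. walk ok src tgt u ys v \<and> length ys < length xs"
proof -
  obtain i j where ij: "i < j" "j < length xs" "src (xs ! i) = src (xs ! j)"
    using assms(2) by (auto simp: distinct_conv_nth) (metis linorder_neq_iff)
  have "walk ok src tgt u (take i xs @ drop j xs) v"
    using walk_split_nth[OF assms(1)] ij by (metis walk_append less_trans)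
  then show ?thesis
    using ij by (intro exI[of _ "take i xs @ drop j xs"]) auto
qed

lemma walk_shortcut:
  assumes "walk ok src tgt u xs v" "v \<in> T"
  shows "\<exists>ys t. walk ok src tgt u ys t \<and> t \<in> T \<and> distinct (map src ys) \<and> (\<forall>y\<in>set ys. src y \<notin> T)"
  using assms
proof (induction "length xs" arbitrary: xs v rule: less_induct)
  case less
  show ?case
  proof (cases "\<exists>i < length xs. src (xs ! i) \<in> T")
    case True
    then obtain i where i: "i < length xs" "src (xs ! i) \<in> T" by blast
    then have "walk ok src tgt u (take i xs) (src (xs ! i))"
      using walk_split_nth[OF less.prems(1)] by blast
    moreover have "length (take i xs) < length xs" using i by simp
    ultimately show ?thesis using less.hyps i(2) by blast
  next
    case outside: False
    show ?thesis
    proof (cases "distinct (map src xs)")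
      case True
      with outside less.prems show ?thesis by (metis in_set_conv_nth)
    next
      case False
      then obtain ys where "walk ok src tgt u ys v" "length ys < length xs"
        using walk_skip_cycle[OF less.prems(1)] by blast
      then show ?thesis using less.hyps less.prems(2) by blast
    qed
  qed
qed

lemma walk_target_in:
  "walk ok src tgt u xs v \<Longrightarrow> u \<in> W \<Longrightarrow> (\<And>x. ok x \<Longrightarrow> tgt x \<in> W) \<Longrightarrow> v \<in> W"
  by (induction xs arbitrary: u) auto

lemma walk_steps: "walk ok src tgt u xs v \<Longrightarrow> x \<in> set xs \<Longrightarrow> ok x"
  by (induction xs arbitrary: u) auto

lemma walk_balance:
  assumes "walk ok src tgt u xs v" "distinct xs"
  shows "(\<Sum>x\<in>set xs. of_bool (tgt x = w) - of_bool (src x = w) :: int) = of_bool (v = w) - of_bool (u = w)"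
  using assms by (induction xs arbitrary: u) auto

lemma walk_path_verts:
  "walk ok tail head u es v \<Longrightarrow> path_verts head u es = map tail es @ [v]"
  by (induction es arbitrary: u) (auto simp: path_verts_def)

lemma sum_of_bool_fibers:
  assumes "finite A" "finite R"
  shows "(\<Sum>v\<in>R. \<Sum>a\<in>A. of_bool (f a = v) :: int) = int (card {a\<in>A. f a \<in> R})"
proof -
  have "(\<Sum>v\<in>R. \<Sum>a\<in>A. of_bool (f a = v) :: int) = (\<Sum>a\<in>A. of_bool (f a \<in> R))"
    using assms by (subst sum.swap) (simp add: of_bool_def)
  also have "\<dots> = int (card {a\<in>A. f a \<in> R})"
    using assms by (simp add: Collect_conj_eq Int_commute)
  finally show ?thesis .
qed

locale cut_condition =
  fixes tail head :: "'e \<Rightarrow> 'v" and H :: "'e set" and W T :: "'v set"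
  assumes targets_subset: "T \<subseteq> W"
    and finite_entries: "finite (in_edges tail head H W)"
    and cut: "\<And>X. T \<subseteq> X \<Longrightarrow> X \<subseteq> W \<Longrightarrow> enat (card (in_edges tail head H W)) \<le> rho tail head H X"
begin

abbreviation entries :: "'e set" where "entries \<equiv> in_edges tail head H W"
abbreviation inner :: "'e set" where "inner \<equiv> induced_edges tail head H W"

definition excess :: "'e set \<Rightarrow> 'e set \<Rightarrow> 'v \<Rightarrow> int" where
  "excess F S' v = (\<Sum>s\<in>S'. of_bool (head s = v)) + (\<Sum>e\<in>F. of_bool (head e = v) - of_bool (tail e = v))"

text \<open>A unit flow is a finite edge set F of the induced subgraph; every entry edge in S'
injects one unit at its head, and F conserves flow at every vertex of W outside T.\<close>

definition is_flow :: "'e set \<Rightarrow> 'e set \<Rightarrow> bool" where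
  "is_flow F S' \<longleftrightarrow> finite F \<and> F \<subseteq> inner \<and> S' \<subseteq> entries \<and> (\<forall>v\<in>W - T. excess F S' v = 0)"

lemma is_flow_finite_sources: "is_flow F S' \<Longrightarrow> finite S'"
  using finite_entries by (auto simp: is_flow_def intro: finite_subset)

lemma excess_insert_source: "finite S' \<Longrightarrow> s \<notin> S' \<Longrightarrow> excess F (insert s S') v = excess F S' v + of_bool (head s = v)"
  by (simp add: excess_def)

lemma flow_cut_balance:
  assumes flow: "is_flow F S'" and R: "R \<subseteq> W - T"
  shows "card {e\<in>F. tail e \<in> R} = card {e\<in>F. head e \<in> R} + card {s\<in>S'. head s \<in> R}"
proof -
  have F: "finite F" and S': "finite S'"
    using flow is_flow_finite_sources by (auto simp: is_flow_def)
  \<comment> \<open>Only the finitely many vertices incident to the flow matter.\<close>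
  define R' where "R' = R \<inter> (head ` F \<union> tail ` F \<union> head ` S')"
  have R': "finite R'" using F S' by (simp add: R'_def)
  have "0 = (\<Sum>v\<in>R'. excess F S' v)"
    using flow R by (intro sum.neutral[symmetric]) (auto simp: is_flow_def R'_def)
  also have "\<dots> = int (card {s\<in>S'. head s \<in> R'}) + int (card {e\<in>F. head e \<in> R'}) - int (card {e\<in>F. tail e \<in> R'})"
    by (simp add: excess_def sum.distrib sum_subtractf sum_of_bool_fibers[OF S' R'] sum_of_bool_fibers[OF F R'])
  finally show ?thesis
    by (simp add: R'_def conj_commute cong: conj_cong)
qed

text \<open>A residual step (e, True) traverses an unused edge forwards, (e, False) a used one
backwards; flipping it along an augmenting walk updates the flow.\<close>

fun residual :: "'e set \<Rightarrow> 'e \<times> bool \<Rightarrow> bool" where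
  "residual F (e, True) \<longleftrightarrow> e \<in> inner \<and> e \<notin> F"
| "residual F (e, False) \<longleftrightarrow> e \<in> F"

fun res_src :: "'e \<times> bool \<Rightarrow> 'v" where
  "res_src (e, forward) = (if forward then tail e else head e)"

fun res_tgt :: "'e \<times> bool \<Rightarrow> 'v" where
  "res_tgt (e, forward) = (if forward then head e else tail e)"

fun flip :: "'e set \<Rightarrow> 'e \<times> bool \<Rightarrow> 'e set" where
  "flip F (e, True) = insert e F"
| "flip F (e, False) = F - {e}"

lemma excess_flip:
  assumes "residual F x" "finite F"
  shows "excess (flip F x) S' v = excess F S' v + of_bool (res_tgt x = v) - of_bool (res_src x = v)"
  using assms by (cases "(F, x)" rule: flip.cases) (auto simp: excess_def sum.remove)

lemma residual_flip: "residual F y \<Longrightarrow> res_src y \<noteq> res_src x \<Longrightarrow> residual (flip F x) y"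
  by (cases "(F, x)" rule: flip.cases; cases "(F, y)" rule: flip.cases) auto

lemma flip_subset_inner: "residual F x \<Longrightarrow> F \<subseteq> inner \<Longrightarrow> flip F x \<subseteq> inner"
  by (cases "(F, x)" rule: flip.cases) auto

lemma residual_in_W: "residual F x \<Longrightarrow> F \<subseteq> inner \<Longrightarrow> res_tgt x \<in> W"
  by (cases "(F, x)" rule: flip.cases) (auto simp: induced_edges_def)

lemma augment:
  assumes "walk (residual F) res_src res_tgt u xs t" "distinct (map res_src xs)" "t \<in> T"
    and "finite F" "F \<subseteq> inner" "\<forall>v\<in>W - T. excess F S' v = of_bool (u = v)"
  shows "\<exists>F'. finite F' \<and> F' \<subseteq> inner \<and> (\<forall>v\<in>W - T. excess F' S' v = 0)"
  using assms
proof (induction xs arbitrary: F u)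
  case Nil
  then show ?case by auto
next
  case (Cons x xs)
  have x: "residual F x" "res_src x = u" and rest: "walk (residual F) res_src res_tgt (res_tgt x) xs t"
    using Cons.prems(1) by simp_all
  have "walk (residual (flip F x)) res_src res_tgt (res_tgt x) xs t"
    using rest
  proof (rule walk_mono)
    fix y assume "y \<in> set xs" "residual F y"
    then show "residual (flip F x) y"
      using Cons.prems(2) by (intro residual_flip) (auto simp: image_iff)
  qed
  moreover have "\<forall>v\<in>W - T. excess (flip F x) S' v = of_bool (res_tgt x = v)"
    using Cons.prems(4,6) x by (simp add: excess_flip)
  moreover have "finite (flip F x)"
    using Cons.prems(4) by (cases "(F, x)" rule: flip.cases) auto
  ultimately show ?case
    using Cons flip_subset_inner x by simp
qed

definition reachable :: "'e set \<Rightarrow> 'e set \<Rightarrow> 'v set" where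
  "reachable F S' = {v. \<exists>s\<in>entries - S'. \<exists>xs. walk (residual F) res_src res_tgt (head s) xs v}"

lemma reachable_step:
  "u \<in> reachable F S' \<Longrightarrow> residual F x \<Longrightarrow> res_src x = u \<Longrightarrow> res_tgt x \<in> reachable F S'"
  unfolding reachable_def by (auto simp: walk_snoc intro!: exI[of _ "xs @ [x]" for xs])

lemma reachable_subset:
  assumes "F \<subseteq> inner"
  shows "reachable F S' \<subseteq> W"
proof
  fix v assume "v \<in> reachable F S'"
  then obtain s xs where "s \<in> entries" and walk: "walk (residual F) res_src res_tgt (head s) xs v"
    unfolding reachable_def by blast
  from walk show "v \<in> W"
    by (rule walk_target_in) (use \<open>s \<in> entries\<close> residual_in_W[OF _ assms] in \<open>auto simp: in_edges_def\<close>)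
qed

lemma reachable_unused_entry: "s \<in> entries - S' \<Longrightarrow> head s \<in> reachable F S'"
  unfolding reachable_def by (intro CollectI bexI exI[of _ "[]"]) simp_all

lemma reachable_leaving_edge:
  assumes "e \<in> inner" "tail e \<in> reachable F S'" "head e \<notin> reachable F S'"
  shows "e \<in> F"
  using assms reachable_step[of "tail e" F S' "(e, True)"] by auto

lemma reachable_entering_edge:
  assumes "e \<in> F" "head e \<in> reachable F S'"
  shows "tail e \<in> reachable F S'"
  using assms reachable_step[of "head e" F S' "(e, False)"] by simp

lemma residual_cut:
  assumes flow: "is_flow F S'" and avoid: "reachable F S' \<inter> T = {}"
  shows "finite (in_edges tail head H (W - reachable F S')) \<and> card (in_edges tail head H (W - reachable F S')) \<le> card S'"
proof -
  let ?R = "reachable F S'"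
  define I where "I = {e\<in>inner. tail e \<in> ?R \<and> head e \<notin> ?R}"
  have F: "finite F" "F \<subseteq> inner" and S': "finite S'" "S' \<subseteq> entries"
    using flow is_flow_finite_sources by (auto simp: is_flow_def)
  have I: "I \<subseteq> F" "finite I"
    using reachable_leaving_edge F(1) by (auto simp: I_def intro: finite_subset)
  have "{e\<in>F. tail e \<in> ?R} = {e\<in>F. head e \<in> ?R} \<union> I"
    using I F(2) reachable_entering_edge by (auto simp: I_def)
  then have "card {e\<in>F. tail e \<in> ?R} = card {e\<in>F. head e \<in> ?R} + card I"
    using F(1) I by (auto simp: I_def intro!: card_Un_disjoint)
  then have I_card: "card I = card {s\<in>S'. head s \<in> ?R}"
    using flow_cut_balance[OF flow, of ?R] reachable_subset[OF F(2)] avoid by auto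
  have cut_edges: "in_edges tail head H (W - ?R) = {s\<in>entries. head s \<notin> ?R} \<union> I"
    using reachable_subset[OF F(2)] by (auto simp: in_edges_def induced_edges_def I_def)
  have "card (in_edges tail head H (W - ?R)) \<le> card {s\<in>entries. head s \<notin> ?R} + card I"
    unfolding cut_edges by (rule card_Un_le)
  also have "\<dots> \<le> card {s\<in>S'. head s \<notin> ?R} + card {s\<in>S'. head s \<in> ?R}"
    using S'(1) I_card reachable_unused_entry by (auto intro!: card_mono)
  also have "\<dots> = card S'"
    using S'(1) by (subst card_Un_disjoint[symmetric]) (auto intro: arg_cong[where f = card])
  finally show ?thesis
    using cut_edges I(2) finite_entries by simp
qed

lemma augment_step:
  assumes flow: "is_flow F S'" and unused: "S' \<noteq> entries"
  shows "\<exists>F' s. s \<in> entries - S' \<and> is_flow F' (insert s S')"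
proof (cases "reachable F S' \<inter> T = {}")
  case True
  \<comment> \<open>Then the unreachable part of W violates the cut condition.\<close>
  let ?X = "W - reachable F S'"
  have "T \<subseteq> ?X"
    using True targets_subset by blast
  then have "enat (card entries) \<le> rho tail head H ?X"
    using cut by blast
  also have "\<dots> \<le> enat (card S')"
    using residual_cut[OF flow True] by (simp add: rho_def)
  finally have "card entries \<le> card S'"
    by simp
  moreover have "S' \<subset> entries"
    using flow unused by (auto simp: is_flow_def)
  then have "card S' < card entries"
    using finite_entries by (rule psubset_card_mono[rotated])
  ultimately show ?thesis
    by linarith
next
  case False
  then obtain t where "t \<in> reachable F S'" "t \<in> T"
    by blast
  then obtain s xs where s: "s \<in> entries - S'" and walk: "walk (residual F) res_src res_tgt (head s) xs t"
    unfolding reachable_def by blast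
  obtain ys t' where ys: "walk (residual F) res_src res_tgt (head s) ys t'" "t' \<in> T" "distinct (map res_src ys)"
    using walk_shortcut[OF walk \<open>t \<in> T\<close>] by blast
  have "\<forall>v\<in>W - T. excess F (insert s S') v = of_bool (head s = v)"
    using flow s excess_insert_source[OF is_flow_finite_sources[OF flow]] by (simp add: is_flow_def)
  then have "\<exists>F'. finite F' \<and> F' \<subseteq> inner \<and> (\<forall>v\<in>W - T. excess F' (insert s S') v = 0)"
    using flow by (intro augment[OF ys(1,3,2)]) (auto simp: is_flow_def)
  then show ?thesis
    using s flow unfolding is_flow_def by blast
qed

lemma flow_exists: "\<exists>F. is_flow F entries"
proof -
  have "\<exists>F S'. is_flow F S' \<and> card S' = m" if "m \<le> card entries" for m
    using that
  proof (induction m)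
    case 0
    have "is_flow {} {}" by (simp add: is_flow_def excess_def)
    then show ?case by fastforce
  next
    case (Suc m)
    then obtain F S' where flow: "is_flow F S'" and "card S' = m" by auto
    with Suc.prems have "S' \<noteq> entries" by auto
    then obtain F' s where "s \<in> entries - S'" "is_flow F' (insert s S')"
      using augment_step[OF flow] by blast
    then show ?case
      using \<open>card S' = m\<close> is_flow_finite_sources[OF flow] by (metis DiffD2 card_insert_disjoint)
  qed
  then obtain F S' where "is_flow F S'" "card S' = card entries" by blast
  then show ?thesis
    using finite_entries by (metis card_subset_eq is_flow_def)
qed

definition path_to_targets :: "'e set \<Rightarrow> 'v \<Rightarrow> 'e list \<Rightarrow> bool" where
  "path_to_targets F u es \<longleftrightarrow>
     (\<exists>t. t \<in> T \<and> walk (\<lambda>e. e \<in> F) tail head u es t) \<and> distinct (map tail es) \<and> (\<forall>e\<in>set es. tail e \<notin> T)"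

lemma path_to_targets_mono:
  assumes "path_to_targets F u es" "F \<subseteq> F'"
  shows "path_to_targets F' u es"
proof -
  obtain t where "t \<in> T" and walk: "walk (\<lambda>e. e \<in> F) tail head u es t"
    using assms(1) unfolding path_to_targets_def by blast
  have "walk (\<lambda>e. e \<in> F') tail head u es t"
    using walk by (rule walk_mono) (use assms(2) in blast)
  with \<open>t \<in> T\<close> show ?thesis
    using assms(1) unfolding path_to_targets_def by blast
qed

lemma path_to_targets_subset:
  assumes "path_to_targets F u es"
  shows "set es \<subseteq> F"
proof -
  obtain t where "walk (\<lambda>e. e \<in> F) tail head u es t"
    using assms unfolding path_to_targets_def by blast
  then show ?thesis
    using walk_steps by fast
qed

lemma flow_path_from_source:
  assumes flow: "is_flow F (insert s S')"
  shows "\<exists>es. path_to_targets F (head s) es"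
proof -
  define R where "R = {v. \<exists>es. walk (\<lambda>e. e \<in> F) tail head (head s) es v}"
  have F: "finite F" "F \<subseteq> inner" and S': "finite (insert s S')" "insert s S' \<subseteq> entries"
    using flow is_flow_finite_sources[OF flow] by (auto simp: is_flow_def)
  have source: "head s \<in> R"
    unfolding R_def by (intro CollectI exI[of _ "[]"]) simp
  have "R \<inter> T \<noteq> {}"
  proof
    assume avoid: "R \<inter> T = {}"
    have "R \<subseteq> W"
    proof
      fix v assume "v \<in> R"
      then obtain es where "walk (\<lambda>e. e \<in> F) tail head (head s) es v"
        unfolding R_def by blast
      then show "v \<in> W"
        by (rule walk_target_in) (use S'(2) F(2) in \<open>auto simp: in_edges_def induced_edges_def\<close>)
    qed
    then have balance: "card {e\<in>F. tail e \<in> R} = card {e\<in>F. head e \<in> R} + card {x\<in>insert s S'. head x \<in> R}"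
      using flow_cut_balance[OF flow] avoid by blast
    have closed: "{e\<in>F. tail e \<in> R} \<subseteq> {e\<in>F. head e \<in> R}"
    proof safe
      fix e assume "e \<in> F" "tail e \<in> R"
      then obtain es where "walk (\<lambda>e. e \<in> F) tail head (head s) (es @ [e]) (head e)"
        unfolding R_def walk_snoc by blast
      then show "head e \<in> R" unfolding R_def by blast
    qed
    then have "card {x\<in>insert s S'. head x \<in> R} = 0"
      using balance card_mono[OF _ closed] F(1) by simp
    then show False
      using S'(1) source by auto
  qed
  then obtain es t where "walk (\<lambda>e. e \<in> F) tail head (head s) es t" "t \<in> T"
    unfolding R_def by blast
  from walk_shortcut[OF this] show ?thesis
    unfolding path_to_targets_def by blast
qed

lemma flow_remove_path:
  assumes flow: "is_flow F (insert s S')" and new: "s \<notin> S'" and path: "path_to_targets F (head s) es"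
  shows "is_flow (F - set es) S'"
proof -
  obtain t where t: "t \<in> T" and walk: "walk (\<lambda>e. e \<in> F) tail head (head s) es t"
    using path unfolding path_to_targets_def by blast
  have "distinct es"
    using path distinct_map unfolding path_to_targets_def by blast
  have F: "finite F" and sub: "set es \<subseteq> F"
    using flow path_to_targets_subset[OF path] by (auto simp: is_flow_def)
  have S': "finite S'"
    using is_flow_finite_sources[OF flow] by simp
  have "excess (F - set es) S' v = 0" if "v \<in> W - T" for v
  proof -
    have "excess (F - set es) S' v = excess F (insert s S') v - of_bool (head s = v)
        - (\<Sum>e\<in>set es. of_bool (head e = v) - of_bool (tail e = v))"
      using excess_insert_source[OF S' new] F sub by (simp add: excess_def sum_diff)
    also have "\<dots> = - of_bool (t = v)"
      using walk_balance[OF walk \<open>distinct es\<close>] flow that by (simp add: is_flow_def)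
    finally show ?thesis
      using t that by auto
  qed
  then show ?thesis
    using flow F by (auto simp: is_flow_def)
qed

lemma flow_decomposition:
  assumes "is_flow F S'"
  shows "\<exists>P. (\<forall>s\<in>S'. path_to_targets F (head s) (P s)) \<and>
             (\<forall>s\<in>S'. \<forall>s'\<in>S'. s \<noteq> s' \<longrightarrow> set (P s) \<inter> set (P s') = {})"
  using is_flow_finite_sources[OF assms] assms
proof (induction S' arbitrary: F rule: finite_induct)
  case empty
  then show ?case by simp
next
  case (insert s S')
  obtain es where es: "path_to_targets F (head s) es"
    using flow_path_from_source[OF insert.prems] by blast
  obtain P where P: "\<forall>s\<in>S'. path_to_targets (F - set es) (head s) (P s)"
    "\<forall>s\<in>S'. \<forall>s'\<in>S'. s \<noteq> s' \<longrightarrow> set (P s) \<inter> set (P s') = {}"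
    using insert.IH[OF flow_remove_path[OF insert.prems insert.hyps(2) es]] by blast
  have "path_to_targets F (head s') ((P(s := es)) s')" if "s' \<in> insert s S'" for s'
    using that es P(1) path_to_targets_mono[of "F - set es"] by auto
  moreover have "set (P s') \<inter> set es = {}" if "s' \<in> S'" for s'
    using that P(1) path_to_targets_subset by blast
  ultimately show ?case
    using P(2) insert.hyps(2) by (intro exI[of _ "P(s := es)"]) auto
qed

lemma path_to_targets_is_path:
  assumes path: "path_to_targets F u es" and "F \<subseteq> inner" "u \<in> W"
  shows "is_path tail head W inner (u, es) \<and> goes_from_to head (u, es) {u} T"
proof -
  obtain t where t: "t \<in> T" and walk: "walk (\<lambda>e. e \<in> F) tail head u es t"
    using path unfolding path_to_targets_def by blast
  have verts: "path_verts head u es = map tail es @ [t]"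
    using walk_path_verts[OF walk] .
  have "set es \<subseteq> inner"
    using path_to_targets_subset[OF path] assms(2) by blast
  moreover have "set (path_verts head u es) \<subseteq> W"
    using calculation assms(3) by (auto simp: path_verts_def induced_edges_def)
  moreover have "distinct (path_verts head u es)" "set (path_verts head u es) \<inter> T = {t}"
    using verts path t unfolding path_to_targets_def by auto
  moreover have "\<forall>i < length es. tail (es ! i) = path_verts head u es ! i"
    using verts by (simp add: nth_append)
  moreover have "set (path_verts head u es) \<inter> {u} = {u}"
    by (simp add: path_verts_def)
  ultimately show ?thesis
    using verts by (simp add: is_path_def goes_from_to_def path_start_def path_end_def)
qed

lemma exists_good_path_system: "\<exists>P. good_path_system tail head H W T P"
proof -
  obtain F where flow: "is_flow F entries"
    using flow_exists by blast
  then obtain P where P: "\<forall>s\<in>entries. path_to_targets F (head s) (P s)"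
    "\<forall>s\<in>entries. \<forall>s'\<in>entries. s \<noteq> s' \<longrightarrow> set (P s) \<inter> set (P s') = {}"
    using flow_decomposition by blast
  have "is_path tail head W inner (head s, P s) \<and> goes_from_to head (head s, P s) {head s} T"
    if "s \<in> entries" for s
    using path_to_targets_is_path P(1) flow that by (auto simp: is_flow_def in_edges_def)
  then have "good_path_system tail head H W T (\<lambda>s. (head s, P s))"
    using P(2) by (simp add: good_path_system_def)
  then show ?thesis by blast
qed

end

lemma path_last_edge_enters:
  assumes path: "is_path tail head B0 (induced_edges tail head H B0) (u, es)"
    and ends: "goes_from_to head (u, es) {u} B1" and "es \<noteq> []"
  shows "last es \<in> in_edges tail head H B1 \<and> path_end head (u, es) = head (last es)"
proof -
  let ?vs = "path_verts head u es" and ?n = "length es"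
  have len: "length ?vs = Suc ?n"
    by (simp add: path_verts_def)
  have indices: "?n - 1 \<noteq> ?n" "?n - 1 < length ?vs" "?n < length ?vs"
    unfolding len using \<open>es \<noteq> []\<close> by (cases es) auto
  have last_vert: "last ?vs = head (last es)"
    using \<open>es \<noteq> []\<close> by (simp add: path_verts_def last_map)
  have "last es \<in> induced_edges tail head H B0"
    using path \<open>es \<noteq> []\<close> by (auto simp: is_path_def)
  moreover have "tail (last es) = ?vs ! (?n - 1)"
    using path \<open>es \<noteq> []\<close> by (simp add: is_path_def last_conv_nth)
  moreover have "?vs ! (?n - 1) \<noteq> ?vs ! ?n"
    using path indices by (simp add: is_path_def nth_eq_iff_index_eq)
  moreover have "?vs ! ?n = last ?vs"
    by (simp add: path_verts_def last_conv_nth)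
  moreover have "set ?vs \<inter> B1 = {last ?vs}"
    using ends by (simp add: goes_from_to_def path_end_def)
  moreover have "?vs ! (?n - 1) \<in> set ?vs"
    using len by simp
  ultimately show ?thesis
    using last_vert by (auto simp: in_edges_def induced_edges_def path_end_def)
qed

lemma good_path_system_last_edges:
  assumes "B1 \<subseteq> B0"
    and fin: "finite (in_edges tail head H B1)"
    and card: "card (in_edges tail head H B0) = card (in_edges tail head H B1)"
    and good: "good_path_system tail head H B0 B1 P"
  defines "last_edge \<equiv> \<lambda>s. if snd (P s) = [] then s else last (snd (P s))"
  shows "bij_betw last_edge (in_edges tail head H B0) (in_edges tail head H B1)"
    and "\<And>s. s \<in> in_edges tail head H B0 \<Longrightarrow> path_end head (P s) = head (last_edge s)"
proof -
  let ?S0 = "in_edges tail head H B0" and ?S1 = "in_edges tail head H B1"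
  have enters: "last_edge s \<in> ?S1 \<and> path_end head (P s) = head (last_edge s) \<and>
      (snd (P s) \<noteq> [] \<longleftrightarrow> tail (last_edge s) \<in> B0)" if "s \<in> ?S0" for s
  proof (cases "snd (P s) = []")
    case True
    then have "goes_from_to head (fst (P s), []) {head s} B1"
      using good that by (metis good_path_system_def prod.collapse)
    then have "fst (P s) = head s" "fst (P s) \<in> B1"
      by (auto simp: goes_from_to_def path_start_def path_end_def path_verts_def)
    then show ?thesis
      using True that \<open>B1 \<subseteq> B0\<close> by (auto simp: last_edge_def in_edges_def path_end_def path_verts_def)
  next
    case False
    then have "last_edge s \<in> ?S1 \<and> path_end head (P s) = head (last_edge s)"
      using good that path_last_edge_enters[of tail head B0 H "fst (P s)" "snd (P s)" B1]
      by (auto simp: good_path_system_def last_edge_def goes_from_to_def path_start_def)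
    moreover have "set (snd (P s)) \<subseteq> induced_edges tail head H B0"
      using good that by (simp add: good_path_system_def is_path_def)
    then have "last_edge s \<in> induced_edges tail head H B0"
      using last_in_set[OF False] False by (auto simp: last_edge_def)
    ultimately show ?thesis
      using False by (auto simp: induced_edges_def)
  qed
  \<comment> \<open>An empty path contributes its entry edge (tail outside B0), a nonempty one its last edge
    (tail in B0); last edges of distinct nonempty paths differ by edge-disjointness.\<close>
  have "inj_on last_edge ?S0"
  proof (rule inj_onI)
    fix s s' assume "s \<in> ?S0" "s' \<in> ?S0" "last_edge s = last_edge s'"
    then show "s = s'"
      using enters[of s] enters[of s'] good unfolding good_path_system_def last_edge_def
      by (auto simp: in_edges_def split: if_splits) (metis IntI empty_iff last_in_set)
  qed
  moreover have "last_edge ` ?S0 = ?S1"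
    using enters card card_image[OF \<open>inj_on last_edge ?S0\<close>] fin
    by (intro card_subset_eq) auto
  ultimately show "bij_betw last_edge ?S0 ?S1"
    by (simp add: bij_betw_def)
  show "path_end head (P s) = head (last_edge s)" if "s \<in> ?S0" for s
    using enters that by blast
qed

lemma good_path_system_covers_crossing_edges:
  assumes "B1 \<subseteq> B0" "finite (in_edges tail head H B1)"
    "card (in_edges tail head H B0) = card (in_edges tail head H B1)"
    "good_path_system tail head H B0 B1 P"
    and e: "e \<in> H" "tail e \<in> B0 - B1" "head e \<in> B1"
  shows "\<exists>s\<in>in_edges tail head H B0. e \<in> set (snd (P s))"
proof -
  let ?last_edge = "\<lambda>s. if snd (P s) = [] then s else last (snd (P s))"
  note last_edges = good_path_system_last_edges[OF assms(1-4)]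
  have "e \<in> in_edges tail head H B1"
    using e by (simp add: in_edges_def)
  then obtain s where s: "s \<in> in_edges tail head H B0" "e = ?last_edge s"
    unfolding bij_betw_imp_surj_on[OF last_edges(1), symmetric] by blast
  \<comment> \<open>The entry edge s itself has its tail outside B0, so e is the last edge of a nonempty path.\<close>
  then have "snd (P s) \<noteq> []"
    using e by (auto simp: in_edges_def)
  then show ?thesis
    using s by (auto intro!: bexI[of _ s])
qed

lemma good_path_system_path_ends:
  assumes "B1 \<subseteq> B0" "finite (in_edges tail head H B1)"
    "card (in_edges tail head H B0) = card (in_edges tail head H B1)"
    "good_path_system tail head H B0 B1 P"
  shows "image_mset (\<lambda>s. path_end head (P s)) (mset_set (in_edges tail head H B0))
       = image_mset head (mset_set (in_edges tail head H B1))"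
proof -
  let ?last_edge = "\<lambda>s. if snd (P s) = [] then s else last (snd (P s))"
  note last_edges = good_path_system_last_edges[OF assms]
  have "finite (in_edges tail head H B0)"
    using bij_betw_finite[OF last_edges(1)] assms(2) by simp
  have "image_mset (\<lambda>s. path_end head (P s)) (mset_set (in_edges tail head H B0))
      = image_mset (\<lambda>s. head (?last_edge s)) (mset_set (in_edges tail head H B0))"
    using last_edges(2) \<open>finite (in_edges tail head H B0)\<close> by (intro image_mset_cong) simp
  also have "\<dots> = image_mset head (image_mset ?last_edge (mset_set (in_edges tail head H B0)))"
    by (simp only: multiset.map_comp comp_def)
  also have "\<dots> = image_mset head (mset_set (in_edges tail head H B1))"
    using last_edges(1) by (simp add: bij_betw_def image_mset_mset_set)
  finally show ?thesis .
qed

lemma tight_rho_le_subset: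
  assumes cond: "\<forall>X. X \<subseteq> V \<and> X \<noteq> {} \<longrightarrow>
                 rho tail head (rest_edges A As k) X \<ge> enat (card {i. i < k \<and> Vs i \<inter> X = {}})"
    and tight: "tight tail head V A k Vs As Y" and "X \<subseteq> Y" "X \<noteq> {}"
  shows "rho tail head (rest_edges A As k) Y \<le> rho tail head (rest_edges A As k) X"
proof -
  have "card {i. i < k \<and> Vs i \<inter> Y = {}} \<le> card {i. i < k \<and> Vs i \<inter> X = {}}"
    using \<open>X \<subseteq> Y\<close> by (intro card_mono) auto
  then show ?thesis
    using tight cond \<open>X \<subseteq> Y\<close> \<open>X \<noteq> {}\<close> unfolding tight_def
    by (metis (no_types, lifting) dual_order.trans enat_ord_simps(1))
qed

theorem corollary2:
  fixes V :: "'v set" and A :: "'e set" and tail head :: "'e \<Rightarrow> 'v"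
    and k :: nat and Vs :: "nat \<Rightarrow> 'v set" and As :: "nat \<Rightarrow> 'e set"
    and B0 B1 :: "'v set" and l :: nat
  assumes digraph: "\<forall>e\<in>A. tail e \<in> V \<and> head e \<in> V"
    and branchings: "\<forall>i<k. Vs i \<subseteq> V \<and> As i \<subseteq> A \<and> branching tail head (Vs i) (As i)"
    and disjoint: "\<forall>i<k. \<forall>j<k. i \<noteq> j \<longrightarrow> As i \<inter> As j = {}"
    and cond: "\<forall>X. X \<subseteq> V \<and> X \<noteq> {} \<longrightarrow>
                 rho tail head (rest_edges A As k) X \<ge> enat (card {i. i < k \<and> Vs i \<inter> X = {}})"
    and B1B0: "B1 \<subseteq> B0"
    and dB0: "dangerous tail head V A k Vs As B0"
    and dB1: "dangerous tail head V A k Vs As B1"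
    and rB0: "rho tail head (rest_edges A As k) B0 = enat l"
    and rB1: "rho tail head (rest_edges A As k) B1 = enat l"
    and l1: "l \<ge> 1"
  shows "(\<exists>P. good_path_system tail head (rest_edges A As k) B0 B1 P) \<and>
         (\<forall>P. good_path_system tail head (rest_edges A As k) B0 B1 P \<longrightarrow>
            (\<forall>e\<in>rest_edges A As k. tail e \<in> B0 - B1 \<and> head e \<in> B1 \<longrightarrow>
               (\<exists>e0\<in>in_edges tail head (rest_edges A As k) B0. e \<in> set (snd (P e0)))) \<and>
            image_mset (\<lambda>e0. path_end head (P e0)) (mset_set (in_edges tail head (rest_edges A As k) B0))
              = image_mset head (mset_set (in_edges tail head (rest_edges A As k) B1)))"
proof -
  let ?H = "rest_edges A As k"
  let ?S0 = "in_edges tail head ?H B0" and ?S1 = "in_edges tail head ?H B1"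
  have fin: "finite ?S0" "finite ?S1" and card: "card ?S0 = card ?S1"
    using rB0 rB1 by (auto simp: rho_def split: if_splits)
  have "cut_condition tail head ?H B0 B1"
  proof
    fix X assume "B1 \<subseteq> X" "X \<subseteq> B0"
    moreover have "B1 \<noteq> {}"
      using dB1 by (simp add: dangerous_def tight_def)
    ultimately have "rho tail head ?H B0 \<le> rho tail head ?H X"
      using tight_rho_le_subset[OF cond] dB0 by (auto simp: dangerous_def)
    then show "enat (card ?S0) \<le> rho tail head ?H X"
      using fin(1) by (simp add: rho_def)
  qed (use B1B0 fin in auto)
  then have "\<exists>P. good_path_system tail head ?H B0 B1 P"
    by (rule cut_condition.exists_good_path_system)
  moreover have "(\<forall>e\<in>?H. tail e \<in> B0 - B1 \<and> head e \<in> B1 \<longrightarrow> (\<exists>e0\<in>?S0. e \<in> set (snd (P e0)))) \<and>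
      image_mset (\<lambda>e0. path_end head (P e0)) (mset_set ?S0) = image_mset head (mset_set ?S1)"
    if "good_path_system tail head ?H B0 B1 P" for P
    using good_path_system_covers_crossing_edges[OF B1B0 fin(2) card that]
      good_path_system_path_ends[OF B1B0 fin(2) card that] by blast
  ultimately show ?thesis
    by blast
qed

end
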